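(* Let $\mathbf{u}=(u_n)$ be an a-sequence with $q_\mathbf{u}<\infty$. Let $S=\{n_1<n_2<\cdots<n_k<\cdots\}$ be an infinite subset of $S^*_\mathbf{u}$ such that $d_i:=n_{i+1}-n_i\ge 2$ for all $i\ge1$, and let $$x_S=\frac{1}{u_{n_1}}-\frac{1}{u_{n_2}}+\frac{1}{u_{n_3}}-\frac{1}{u_{n_4}}+\cdots \in\mathbb{T}.$$ Then: (a) if $n_k\le n<n_{k+1}$, then $\|u_{n-1}x_S\|\le\|u_{n_k-1}x_S\|$, and $$\frac{1}{q_\mathbf{u}}-\frac{1}{2^{d_k-1}q_\mathbf{u}^2}\le\frac{1}{q_{n_k}}-\frac{1}{q_{n_k}\cdots q_{n_{k+1}}}\le\|u_{n_k-1}x_S\|\le\frac{1}{q_{n_k}}-\frac{1}{q_{n_k}\cdots q_{n_{k+1}}}+\frac{1}{q_{n_k}\cdots q_{n_{k+2}}};$$ (b) $\varrho_\mathbf{u}(x_S,0)=\max\{\|x_S\|,\ \sup_{k\in\mathbb{N}}\|u_{n_k-1}x_S\|\}$; (c) if $S'\neq S$ is another set with the same properties as $S$, then $x_S\neq x_{S'}$.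
   Context: An a-sequence is a strictly increasing sequence of integers $\mathbf{u}=(u_n)_{n\in\mathbb{N}}$ with $u_n\mid u_{n+1}$ for all $n$. Its ratios are $q_0=u_0$ and $q_n=u_n/u_{n-1}$ ($n>0$); $q_\mathbf{u}=\limsup_n q_n$ and $S^*_\mathbf{u}=\{m\in\mathbb{N}: q_m=q_\mathbf{u}\}$. $\mathbb{T}=\mathbb{R}/\mathbb{Z}$, $\|x\|$ is the distance from $x$ to the nearest integer, $d(x,y)=\|x-y\|$, and $\varrho_\mathbf{u}(x,y)=\sup_n\max\{d(x,y),d(u_nx,u_ny)\}$ on $\mathbb{T}$. *)

theory Defs
  imports Complex_Main "HOL-Library.Infinite_Set" "HOL-Library.Extended_Real"
begin

definition a_seq :: "(nat \<Rightarrow> nat) \<Rightarrow> bool" where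
  "a_seq u \<longleftrightarrow> strict_mono u \<and> (\<forall>n. u n dvd u (Suc n))"

text \<open>u_{n-1}, with the convention u_{-1} = 1 (so that q_0 = u_0).\<close>
definition uprev :: "(nat \<Rightarrow> nat) \<Rightarrow> nat \<Rightarrow> nat" where
  "uprev u n = (if n = 0 then 1 else u (n - 1))"

definition qr :: "(nat \<Rightarrow> nat) \<Rightarrow> nat \<Rightarrow> real" where
  "qr u n = real (u n) / real (uprev u n)"

definition qsup :: "(nat \<Rightarrow> nat) \<Rightarrow> ereal" where
  "qsup u = limsup (\<lambda>n. ereal (qr u n))"

definition Sstar :: "(nat \<Rightarrow> nat) \<Rightarrow> nat set" where
  "Sstar u = {m. ereal (qr u m) = qsup u}"

definition nint :: "real \<Rightarrow> real" where
  "nint x = \<bar>x - of_int (round x)\<bar>"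

text \<open>rho_u(x,y) on the circle, points represented by real numbers.\<close>
definition rho :: "(nat \<Rightarrow> nat) \<Rightarrow> real \<Rightarrow> real \<Rightarrow> real" where
  "rho u x y = (SUP n. max (nint (x - y)) (nint (real (u n) * x - real (u n) * y)))"

text \<open>Admissible sets S: infinite subsets of S* with gaps at least 2.
  The paper's n_k (k >= 1) is enumerate S (k - 1).\<close>
definition admissible :: "(nat \<Rightarrow> nat) \<Rightarrow> nat set \<Rightarrow> bool" where
  "admissible u S \<longleftrightarrow> infinite S \<and> S \<subseteq> Sstar u \<and>
     (\<forall>i. enumerate S i + 2 \<le> enumerate S (Suc i))"

text \<open>x_S = 1/u_{n_1} - 1/u_{n_2} + ... (a real representative of the point of T).\<close>
definition xS :: "(nat \<Rightarrow> nat) \<Rightarrow> nat set \<Rightarrow> real" where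
  "xS u S = (\<Sum>i. (-1) ^ i / real (u (enumerate S i)))"

end

theory Submission
  imports Defs
begin

text \<open>Multiplying x_S by u_{n-1} turns every term +-1/u_{n_i} with n_i < n into an integer, because
  u_{n_i} divides u_{n-1}. What remains is, up to sign, an alternating series with decreasing terms
  whose leading term u_{n-1}/u_m (m the first element of S with m \<ge> n) is at most 1/2; so it equals
  the distance of u_{n-1} x_S to the nearest integer, and the Leibniz bounds apply. For n \<in> S the
  leading term is 1/q_u and the gap condition pushes the value above 1/(2 q_u); for n \<notin> S with
  q_n \<ge> 2 the leading term is at most 1/(2 q_u). Hence S can be read off from x_S modulo 1, which
  gives (c), and (a) and (b) follow from the same two estimates.\<close>

lemma nint_le_dist_int: "nint y \<le> \<bar>y - of_int m\<bar>"
proof (cases "m = round y")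
  case False
  then have "1 \<le> \<bar>of_int m - of_int (round y) :: real\<bar>"
    by (metis of_int_1_le_iff of_int_abs of_int_diff zero_less_abs_iff int_one_le_iff_zero_less eq_iff_diff_eq_0)
  then show ?thesis
    using of_int_round_abs_le[of y] unfolding nint_def by linarith
qed (simp add: nint_def)

lemma nint_bounds: "0 \<le> nint y" "nint y \<le> 1/2"
  using of_int_round_abs_le[of y] by (auto simp: nint_def abs_minus_commute)

lemma nint_eq_self:
  assumes "0 \<le> y" "y \<le> 1/2"
  shows "nint y = y"
proof (rule antisym)
  show "nint y \<le> y"
    using nint_le_dist_int[of y 0] assms by simp
  show "y \<le> nint y"
  proof (cases "round y \<le> 0")
    case False
    then have "(1::real) \<le> of_int (round y)" by simp
    then show ?thesis using assms unfolding nint_def by linarith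
  qed (use assms in \<open>simp add: nint_def\<close>)
qed

lemma nint_add_of_int: "nint (of_int z + y) = nint y"
  using nint_le_dist_int[of "of_int z + y" "z + round y"] nint_le_dist_int[of y "round (of_int z + y) - z"]
  by (simp add: nint_def)

lemma nint_uminus: "nint (- y) = nint y"
  using nint_le_dist_int[of "- y" "- round y"] nint_le_dist_int[of y "- round (- y)"]
  by (simp add: nint_def)

lemma nint_add_of_int_signed: "nint (of_int z + (-1) ^ j * y) = nint y"
  using nint_add_of_int[of z y] nint_add_of_int[of z "- y"] nint_uminus[of y]
  by (cases "even j") simp_all

lemma a_seq_pos: "a_seq u \<Longrightarrow> 0 < u n"
  unfolding a_seq_def
  by (metis dvd_0_left_iff gr0I le0 lessI not_less strict_mono_less strict_mono_less_eq)

lemma a_seq_dvd: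
  assumes "a_seq u" "m \<le> n"
  shows "u m dvd u n"
  using assms(2) by (induction n rule: dec_induct) (use assms(1) in \<open>auto simp: a_seq_def intro: dvd_trans\<close>)

lemma a_seq_double:
  assumes "a_seq u"
  shows "2 * u n \<le> u (Suc n)"
proof -
  obtain c where c: "u (Suc n) = u n * c"
    using assms by (auto simp: a_seq_def)
  moreover have "u n < u (Suc n)"
    using assms by (simp add: a_seq_def strict_mono_def)
  ultimately have "c \<noteq> 0" "c \<noteq> 1"
    by auto
  then have "2 \<le> c"
    by linarith
  then show ?thesis using c by simp
qed

lemma a_seq_pow2_le:
  assumes "a_seq u" "m \<le> n"
  shows "2 ^ (n - m) * u m \<le> u n"
  using assms(2)
proof (induction n rule: dec_induct)
  case (step n)
  have "2 ^ (Suc n - m) * u m = 2 * (2 ^ (n - m) * u m)"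
    using step.hyps(1) by (simp add: Suc_diff_le)
  also have "\<dots> \<le> 2 * u n"
    using step.IH by simp
  also have "\<dots> \<le> u (Suc n)"
    using a_seq_double[OF assms(1)] .
  finally show ?case .
qed simp

lemma uprev_pos: "a_seq u \<Longrightarrow> 0 < uprev u n"
  by (simp add: uprev_def a_seq_pos)

lemma a_seq_le_uprev: "a_seq u \<Longrightarrow> m < n \<Longrightarrow> u m \<le> uprev u n"
  by (simp add: uprev_def a_seq_def strict_mono_less_eq)

lemma a_seq_dvd_uprev: "a_seq u \<Longrightarrow> m < n \<Longrightarrow> u m dvd uprev u n"
  by (simp add: uprev_def a_seq_dvd)

lemma u_eq_qr_mult_uprev: "a_seq u \<Longrightarrow> real (u n) = qr u n * real (uprev u n)"
  using uprev_pos[of u n] by (simp add: qr_def)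

lemma a_seq_qr_ge_2: "a_seq u \<Longrightarrow> 0 < n \<Longrightarrow> 2 \<le> qr u n"
  using a_seq_double[of u "n - 1"] a_seq_pos[of u "n - 1"]
  by (simp add: qr_def uprev_def field_simps)

lemma prod_qr:
  assumes "a_seq u" "m \<le> n"
  shows "(\<Prod>j\<in>{m..n}. qr u j) = real (u n) / real (uprev u m)"
  using assms(2)
proof (induction n rule: dec_induct)
  case (step n)
  have "{m..Suc n} = insert (Suc n) {m..n}"
    using step.hyps(1) by auto
  then have "(\<Prod>j\<in>{m..Suc n}. qr u j) = real (u (Suc n)) / real (u n) * (real (u n) / real (uprev u m))"
    using step.IH by (simp add: qr_def uprev_def)
  then show ?case
    using a_seq_pos[OF assms(1), of n] by simp
qed (simp add: qr_def)

lemma suminf_alternating_bounds: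
  fixes a :: "nat \<Rightarrow> real"
  assumes "a \<longlonglongrightarrow> 0" "\<And>n. 0 \<le> a n" "\<And>n. a (Suc n) \<le> a n"
  shows "a 0 - a 1 \<le> (\<Sum>i. (-1) ^ i * a i)"
    and "(\<Sum>i. (-1) ^ i * a i) \<le> a 0 - a 1 + a 2"
  using summable_Leibniz'(2)[OF assms, of 1] summable_Leibniz'(4)[OF assms, of 1]
  by (simp_all add: numeral_2_eq_2 numeral_3_eq_3)

lemma reciprocal_strict_mono_Leibniz:
  fixes v :: "nat \<Rightarrow> nat"
  assumes "strict_mono v" "0 < v 0" "0 \<le> c"
  shows "(\<lambda>i. c / real (v i)) \<longlonglongrightarrow> 0"
    and "0 \<le> c / real (v i)"
    and "c / real (v (Suc i)) \<le> c / real (v i)"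
proof -
  have "filterlim (\<lambda>i. real (v i)) at_top sequentially"
    using filterlim_compose[OF filterlim_real_sequentially filterlim_subseq[OF assms(1)]] .
  then show "(\<lambda>i. c / real (v i)) \<longlonglongrightarrow> 0"
    by (intro tendsto_divide_0[OF tendsto_const] filterlim_at_top_imp_at_infinity)
  have "0 < v i" "v i \<le> v (Suc i)"
    using assms(2) strict_mono_less_eq[OF assms(1), of 0 i] strict_mono_less_eq[OF assms(1), of i "Suc i"]
    by auto
  then show "0 \<le> c / real (v i)" "c / real (v (Suc i)) \<le> c / real (v i)"
    using assms(3) by (auto intro: divide_left_mono)
qed

lemma mult_alternating_reciprocal_suminf:
  fixes v :: "nat \<Rightarrow> nat" and N j :: nat
  assumes v: "strict_mono v" "0 < v 0" and dvd: "\<And>i. i < j \<Longrightarrow> v i dvd N"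
  shows "\<exists>z::int. real N * (\<Sum>i. (-1) ^ i / real (v i))
           = of_int z + (-1) ^ j * (\<Sum>i. (-1) ^ i * (real N / real (v (i + j))))"
proof -
  define a where "a i = real N / real (v i)" for i
  have a: "a \<longlonglongrightarrow> 0" "\<And>i. 0 \<le> a i" "\<And>i. a (Suc i) \<le> a i"
    unfolding a_def using reciprocal_strict_mono_Leibniz[OF v] by auto
  have v_shift: "strict_mono (\<lambda>i. v (i + j))" "0 < v (0 + j)"
    using v strict_mono_less_eq[OF v(1), of 0 j] by (auto simp: strict_mono_def)
  note summable = summable_Leibniz'(1)[OF a]
  have "real N * (\<Sum>i. (-1) ^ i / real (v i)) = (\<Sum>i. (-1) ^ i * a i)"
    using summable_Leibniz'(1)[OF reciprocal_strict_mono_Leibniz[OF v, of 1]]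
    by (subst suminf_mult[symmetric]) (auto simp: a_def mult_ac)
  also have "\<dots> = (\<Sum>i. (-1) ^ (i + j) * a (i + j)) + (\<Sum>i<j. (-1) ^ i * a i)"
    using suminf_split_initial_segment[OF summable] .
  also have "(\<Sum>i. (-1) ^ (i + j) * a (i + j)) = (-1) ^ j * (\<Sum>i. (-1) ^ i * a (i + j))"
    using summable_Leibniz'(1)[OF reciprocal_strict_mono_Leibniz[OF v_shift, of "real N"]]
    by (subst suminf_mult[symmetric]) (auto simp: a_def power_add mult_ac)
  finally have split: "real N * (\<Sum>i. (-1) ^ i / real (v i))
      = (-1) ^ j * (\<Sum>i. (-1) ^ i * a (i + j)) + (\<Sum>i<j. (-1) ^ i * a i)" .
  have "(\<Sum>i<j. (-1) ^ i * a i) \<in> \<int>"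
  proof (rule Ints_sum)
    fix i assume "i \<in> {..<j}"
    then obtain c where "N = v i * c"
      using dvd by (auto elim: dvdE)
    then have "(-1) ^ i * a i = (-1) ^ i * real c"
      using strict_mono_less_eq[OF v(1), of 0 i] v(2) by (simp add: a_def)
    then show "(-1) ^ i * a i \<in> \<int>"
      by simp
  qed
  then obtain z where "(\<Sum>i<j. (-1) ^ i * a i) = of_int z"
    by (auto elim: Ints_cases)
  then show ?thesis
    using split by (auto simp: a_def)
qed

lemma alternating_reciprocal_tail_bounds:
  fixes v :: "nat \<Rightarrow> nat" and N j :: nat
  assumes v: "strict_mono v" "0 < v 0"
  defines "T \<equiv> \<Sum>i. (-1) ^ i * (real N / real (v (i + j)))"
  shows "real N / real (v j) - real N / real (v (Suc j)) \<le> T"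
    and "T \<le> real N / real (v j) - real N / real (v (Suc j)) + real N / real (v (Suc (Suc j)))"
    and "0 \<le> T" "T \<le> real N / real (v j)"
proof -
  have v_shift: "strict_mono (\<lambda>i. v (i + j))" "0 < v (0 + j)"
    using v strict_mono_less_eq[OF v(1), of 0 j] by (auto simp: strict_mono_def)
  note L = reciprocal_strict_mono_Leibniz[OF v_shift, of "real N"]
  show lower: "real N / real (v j) - real N / real (v (Suc j)) \<le> T"
    and upper: "T \<le> real N / real (v j) - real N / real (v (Suc j)) + real N / real (v (Suc (Suc j)))"
    using suminf_alternating_bounds[OF L(1-3)] by (simp_all add: T_def)
  show "0 \<le> T" "T \<le> real N / real (v j)"
    using lower upper L(3)[of 0] L(3)[of 1] by simp_all
qed

lemma nint_mult_alternating_reciprocal_suminf: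
  fixes v :: "nat \<Rightarrow> nat" and N j :: nat
  assumes v: "strict_mono v" "0 < v 0" and dvd: "\<And>i. i < j \<Longrightarrow> v i dvd N"
    and small: "real N / real (v j) \<le> 1/2"
  shows "nint (real N * (\<Sum>i. (-1) ^ i / real (v i)))
           = (\<Sum>i. (-1) ^ i * (real N / real (v (i + j))))"
proof -
  define T where "T = (\<Sum>i. (-1) ^ i * (real N / real (v (i + j))))"
  have "0 \<le> T" "T \<le> real N / real (v j)"
    using alternating_reciprocal_tail_bounds(3,4)[OF v, of N j] by (simp_all add: T_def)
  then have "nint T = T"
    using small by (intro nint_eq_self) linarith+
  moreover obtain z where "real N * (\<Sum>i. (-1) ^ i / real (v i)) = of_int z + (-1) ^ j * T"
    using mult_alternating_reciprocal_suminf[OF v dvd] unfolding T_def by blast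
  ultimately show ?thesis
    by (simp add: nint_add_of_int_signed T_def)
qed

context
  fixes u :: "nat \<Rightarrow> nat" and S :: "nat set"
  assumes a_seq: "a_seq u" and admissible: "admissible u S"
begin

abbreviation qmax :: real where "qmax \<equiv> real_of_ereal (qsup u)"

lemma infinite_S: "infinite S"
  using admissible by (simp add: admissible_def)

lemma enumerate_gap: "enumerate S k + 2 \<le> enumerate S (Suc k)"
  using admissible by (simp add: admissible_def)

lemma strict_mono_u_enumerate: "strict_mono (\<lambda>i. u (enumerate S i))" "0 < u (enumerate S 0)"
  using a_seq infinite_S by (auto simp: a_seq_def strict_mono_def a_seq_pos)

lemma qr_eq_qmax:
  assumes "m \<in> S"
  shows "qr u m = qmax"
proof -
  have "ereal (qr u m) = qsup u"
    using admissible assms by (auto simp: admissible_def Sstar_def)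
  then show ?thesis
    by (metis real_of_ereal.simps(1))
qed

lemma u_eq_qmax_mult_uprev: "m \<in> S \<Longrightarrow> real (u m) = qmax * real (uprev u m)"
  using u_eq_qr_mult_uprev[OF a_seq] qr_eq_qmax by simp

lemma qmax_ge_2: "2 \<le> qmax"
proof -
  have "0 < enumerate S 1"
    using enumerate_mono[OF _ infinite_S, of 0 1] by simp
  then have "2 \<le> qr u (enumerate S 1)"
    by (rule a_seq_qr_ge_2[OF a_seq])
  then show ?thesis
    using qr_eq_qmax[OF enumerate_in_set[OF infinite_S]] by simp
qed

lemma nint_uprev_not_in_S:
  assumes "n \<notin> S" "2 \<le> qr u n"
  shows "nint (real (uprev u n) * xS u S) \<le> 1 / (2 * qmax)"
proof -
  define j where "j = (LEAST j. n \<le> enumerate S j)"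
  have "n \<le> enumerate S j"
    unfolding j_def using le_enumerate[OF infinite_S] by (rule LeastI)
  then have "n < enumerate S j"
    using assms(1) enumerate_in_set[OF infinite_S] by (metis le_neq_implies_less)
  have below: "enumerate S i < n" if "i < j" for i
    using not_less_Least[OF that[unfolded j_def]] by simp
  have "2 * real (uprev u n) \<le> real (u n)"
    using u_eq_qr_mult_uprev[OF a_seq, of n] assms(2) uprev_pos[OF a_seq, of n] by simp
  also have "\<dots> \<le> real (uprev u (enumerate S j))"
    using a_seq_le_uprev[OF a_seq \<open>n < enumerate S j\<close>] by simp
  finally have first: "real (uprev u n) / real (u (enumerate S j)) \<le> 1 / (2 * qmax)"
    using u_eq_qmax_mult_uprev[OF enumerate_in_set[OF infinite_S]] qmax_ge_2 uprev_pos[OF a_seq]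
    by (simp add: field_simps)
  moreover have "1 / (2 * qmax) \<le> 1/2"
    using qmax_ge_2 by simp
  ultimately have half: "real (uprev u n) / real (u (enumerate S j)) \<le> 1/2"
    by linarith
  have "nint (real (uprev u n) * xS u S)
      = (\<Sum>i. (-1) ^ i * (real (uprev u n) / real (u (enumerate S (i + j)))))"
    unfolding xS_def
    by (rule nint_mult_alternating_reciprocal_suminf[OF strict_mono_u_enumerate a_seq_dvd_uprev[OF a_seq below] half])
  also have "\<dots> \<le> real (uprev u n) / real (u (enumerate S j))"
    using alternating_reciprocal_tail_bounds(4)[OF strict_mono_u_enumerate] .
  finally show ?thesis
    using first by linarith
qed

lemma enumerate_pos_Suc: "0 < enumerate S (Suc k)"
  using enumerate_gap[of k] by simp

lemma uprev_div_u_enumerate_Suc_le: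
  "real (uprev u (enumerate S k)) / real (u (enumerate S (Suc k)))
     \<le> 1 / (2 ^ (enumerate S (Suc k) - enumerate S k - 1) * qmax ^ 2)"
proof -
  define d where "d = enumerate S (Suc k) - enumerate S k - 1"
  define N where "N = real (uprev u (enumerate S k))"
  have "N > 0" "qmax > 0"
    using uprev_pos[OF a_seq] qmax_ge_2 by (simp_all add: N_def)
  have "2 ^ d * u (enumerate S k) \<le> u (enumerate S (Suc k) - 1)"
    using a_seq_pow2_le[OF a_seq, of "enumerate S k" "enumerate S (Suc k) - 1"] enumerate_gap[of k]
    by (simp add: d_def)
  then have "real (2 ^ d * u (enumerate S k)) \<le> real (u (enumerate S (Suc k) - 1))"
    by (rule of_nat_mono)
  then have "2 ^ d * real (u (enumerate S k)) \<le> real (uprev u (enumerate S (Suc k)))"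
    using enumerate_pos_Suc[of k] by (simp add: uprev_def)
  then have "2 ^ d * (qmax * N) \<le> real (uprev u (enumerate S (Suc k)))"
    using u_eq_qmax_mult_uprev[OF enumerate_in_set[OF infinite_S], of k] by (simp add: N_def)
  then have "2 ^ d * qmax ^ 2 * N \<le> real (u (enumerate S (Suc k)))"
    using u_eq_qmax_mult_uprev[OF enumerate_in_set[OF infinite_S], of "Suc k"] \<open>qmax > 0\<close>
    by (simp add: power2_eq_square mult_ac mult_left_mono)
  then have "N / real (u (enumerate S (Suc k))) \<le> N / (2 ^ d * qmax ^ 2 * N)"
    using \<open>N > 0\<close> \<open>qmax > 0\<close> a_seq_pos[OF a_seq] by (intro divide_left_mono) auto
  then show ?thesis
    using \<open>N > 0\<close> by (simp add: N_def d_def)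
qed

lemma nint_uprev_enumerate_bounds:
  fixes k :: nat
  defines "N \<equiv> real (uprev u (enumerate S k))"
  shows "1 / qmax - N / real (u (enumerate S (Suc k))) \<le> nint (N * xS u S)"
    and "nint (N * xS u S)
           \<le> 1 / qmax - N / real (u (enumerate S (Suc k))) + N / real (u (enumerate S (Suc (Suc k))))"
proof -
  have first: "N / real (u (enumerate S k)) = 1 / qmax"
    using u_eq_qmax_mult_uprev[OF enumerate_in_set[OF infinite_S], of k] uprev_pos[OF a_seq] qmax_ge_2
    by (simp add: N_def)
  then have half: "N / real (u (enumerate S k)) \<le> 1/2"
    using qmax_ge_2 by simp
  have dvd: "u (enumerate S i) dvd uprev u (enumerate S k)" if "i < k" for i
    using a_seq_dvd_uprev[OF a_seq] infinite_S that by simp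
  have "nint (N * xS u S)
      = (\<Sum>i. (-1) ^ i * (N / real (u (enumerate S (i + k)))))"
    unfolding xS_def N_def
    by (rule nint_mult_alternating_reciprocal_suminf[OF strict_mono_u_enumerate dvd half[unfolded N_def]])
  then show "1 / qmax - N / real (u (enumerate S (Suc k))) \<le> nint (N * xS u S)"
    and "nint (N * xS u S)
           \<le> 1 / qmax - N / real (u (enumerate S (Suc k))) + N / real (u (enumerate S (Suc (Suc k))))"
    using alternating_reciprocal_tail_bounds(1,2)[OF strict_mono_u_enumerate, of "uprev u (enumerate S k)" k]
      first by (simp_all add: N_def)
qed

lemma nint_uprev_enumerate_gt: "1 / (2 * qmax) < nint (real (uprev u (enumerate S k)) * xS u S)"
proof -
  have "(2::real) ^ 1 \<le> 2 ^ (enumerate S (Suc k) - enumerate S k - 1)"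
    using enumerate_gap[of k] by (intro power_increasing) auto
  then have "1 / (2 ^ (enumerate S (Suc k) - enumerate S k - 1) * qmax ^ 2) \<le> 1 / (2 * qmax ^ 2)"
    using qmax_ge_2 by (intro divide_left_mono mult_right_mono) auto
  moreover have "1 / (2 * qmax) < 1 / qmax - 1 / (2 * qmax ^ 2)"
    using qmax_ge_2 by (simp add: field_simps power2_eq_square)
  ultimately show ?thesis
    using nint_uprev_enumerate_bounds(1)[of k] uprev_div_u_enumerate_Suc_le[of k] by linarith
qed

lemma mem_S_iff: "n \<in> S \<longleftrightarrow> 2 \<le> qr u n \<and> 1 / (2 * qmax) < nint (real (uprev u n) * xS u S)"
proof
  assume "n \<in> S"
  moreover obtain k where "enumerate S k = n"
    using enumerate_Ex[OF infinite_S \<open>n \<in> S\<close>] ..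
  ultimately show "2 \<le> qr u n \<and> 1 / (2 * qmax) < nint (real (uprev u n) * xS u S)"
    using qr_eq_qmax qmax_ge_2 nint_uprev_enumerate_gt[of k] by auto
next
  assume "2 \<le> qr u n \<and> 1 / (2 * qmax) < nint (real (uprev u n) * xS u S)"
  then show "n \<in> S"
    using nint_uprev_not_in_S[of n] by linarith
qed

lemma nint_uprev_le_enumerate:
  assumes "enumerate S k \<le> n" "n < enumerate S (Suc k)"
  shows "nint (real (uprev u n) * xS u S) \<le> nint (real (uprev u (enumerate S k)) * xS u S)"
proof (cases "n = enumerate S k")
  case False
  have "n \<notin> S"
  proof
    assume "n \<in> S"
    then obtain i where "enumerate S i = n"
      using enumerate_Ex[OF infinite_S] by blast
    then show False
      using assms False infinite_S by (metis enumerate_mono_iff le_neq_implies_less less_Suc_eq not_less)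
  qed
  moreover have "2 \<le> qr u n"
    using a_seq_qr_ge_2[OF a_seq] assms(1) False by simp
  ultimately show ?thesis
    using nint_uprev_not_in_S nint_uprev_enumerate_gt[of k] by fastforce
qed simp

lemma rho_xS_0:
  "rho u (xS u S) 0 = max (nint (xS u S)) (SUP k. nint (real (uprev u (enumerate S k)) * xS u S))"
proof -
  define x where "x = xS u S"
  define g where "g k = nint (real (uprev u (enumerate S k)) * x)" for k
  define h where "h n = max (nint x) (nint (real (u n) * x))" for n
  have "bdd_above (range g)" "bdd_above (range h)"
    using nint_bounds by (auto simp: g_def h_def max_def intro!: bdd_aboveI[where M = "1/2"])
  then have g_le: "g k \<le> (SUP k. g k)" and h_le: "h n \<le> (SUP n. h n)" for k n
    by (auto intro: cSUP_upper)
  have "h n \<le> max (nint x) (SUP k. g k)" for n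
  proof -
    have "nint (real (uprev u (Suc n)) * x) \<le> (SUP k. g k)"
    proof (cases "Suc n \<in> S")
      case True
      then obtain k where "enumerate S k = Suc n"
        using enumerate_Ex[OF infinite_S] by blast
      then show ?thesis
        using g_le[of k] by (simp add: g_def)
    next
      case False
      then have "nint (real (uprev u (Suc n)) * x) \<le> g 0"
        using nint_uprev_not_in_S a_seq_qr_ge_2[OF a_seq] nint_uprev_enumerate_gt[of 0]
        by (fastforce simp: g_def x_def)
      then show ?thesis
        using g_le[of 0] by linarith
    qed
    then show ?thesis
      by (simp add: h_def uprev_def)
  qed
  moreover have "g k \<le> (SUP n. h n)" for k
    using h_le[of 0] h_le[of "enumerate S k - 1"]
    by (cases "enumerate S k = 0") (simp_all add: g_def h_def uprev_def)
  moreover have "nint x \<le> (SUP n. h n)"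
    using h_le[of 0] by (simp add: h_def)
  ultimately have "(SUP n. h n) = max (nint x) (SUP k. g k)"
    by (intro antisym cSUP_least max.boundedI) auto
  then show ?thesis
    by (simp add: rho_def h_def g_def x_def)
qed

lemma nint_uprev_enumerate_qr_bounds:
  "1 / qmax - 1 / (2 ^ (enumerate S (Suc k) - enumerate S k - 1) * qmax ^ 2)
     \<le> 1 / qr u (enumerate S k) - 1 / (\<Prod>j\<in>{enumerate S k..enumerate S (Suc k)}. qr u j)"
  "1 / qr u (enumerate S k) - 1 / (\<Prod>j\<in>{enumerate S k..enumerate S (Suc k)}. qr u j)
     \<le> nint (real (uprev u (enumerate S k)) * xS u S)"
  "nint (real (uprev u (enumerate S k)) * xS u S)
     \<le> 1 / qr u (enumerate S k) - 1 / (\<Prod>j\<in>{enumerate S k..enumerate S (Suc k)}. qr u j)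
        + 1 / (\<Prod>j\<in>{enumerate S k..enumerate S (Suc (Suc k))}. qr u j)"
proof -
  have "enumerate S k \<le> enumerate S (Suc k)" "enumerate S k \<le> enumerate S (Suc (Suc k))"
    using infinite_S by simp_all
  then have prod1: "1 / (\<Prod>j\<in>{enumerate S k..enumerate S (Suc k)}. qr u j)
      = real (uprev u (enumerate S k)) / real (u (enumerate S (Suc k)))"
    and prod2: "1 / (\<Prod>j\<in>{enumerate S k..enumerate S (Suc (Suc k))}. qr u j)
      = real (uprev u (enumerate S k)) / real (u (enumerate S (Suc (Suc k))))"
    by (simp_all add: prod_qr[OF a_seq])
  note bounds = nint_uprev_enumerate_bounds[of k] uprev_div_u_enumerate_Suc_le[of k]
  show "1 / qmax - 1 / (2 ^ (enumerate S (Suc k) - enumerate S k - 1) * qmax ^ 2)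
     \<le> 1 / qr u (enumerate S k) - 1 / (\<Prod>j\<in>{enumerate S k..enumerate S (Suc k)}. qr u j)"
    "1 / qr u (enumerate S k) - 1 / (\<Prod>j\<in>{enumerate S k..enumerate S (Suc k)}. qr u j)
     \<le> nint (real (uprev u (enumerate S k)) * xS u S)"
    "nint (real (uprev u (enumerate S k)) * xS u S)
     \<le> 1 / qr u (enumerate S k) - 1 / (\<Prod>j\<in>{enumerate S k..enumerate S (Suc k)}. qr u j)
        + 1 / (\<Prod>j\<in>{enumerate S k..enumerate S (Suc (Suc k))}. qr u j)"
    using bounds unfolding prod1 prod2 qr_eq_qmax[OF enumerate_in_set[OF infinite_S]] by linarith+
qed

end

lemma xS_diff_not_Ints:
  assumes "a_seq u" "admissible u S" "admissible u S'" "S' \<noteq> S"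
  shows "xS u S - xS u S' \<notin> \<int>"
proof
  assume "xS u S - xS u S' \<in> \<int>"
  then obtain z where "xS u S = of_int z + xS u S'"
    by (metis Ints_cases diff_eq_eq add.commute)
  then have "nint (real (uprev u n) * xS u S) = nint (real (uprev u n) * xS u S')" for n
    using nint_add_of_int[of "int (uprev u n) * z"] by (simp add: distrib_left)
  then have "S = S'"
    by (intro set_eqI) (simp only: mem_S_iff[OF assms(1,2)] mem_S_iff[OF assms(1,3)])
  with assms(4) show False
    by simp
qed

theorem mainTheorem5:
  fixes u :: "nat \<Rightarrow> nat" and S :: "nat set"
  assumes "a_seq u" and "qsup u < \<infinity>" and "admissible u S"
  defines "x \<equiv> xS u S" and "Q \<equiv> real_of_ereal (qsup u)" and "nk \<equiv> enumerate S"
  shows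
   "(\<forall>k n. nk k \<le> n \<and> n < nk (Suc k) \<longrightarrow>
        nint (real (uprev u n) * x) \<le> nint (real (uprev u (nk k)) * x)) \<and>
    (\<forall>k.
        1 / Q - 1 / (2 ^ (nk (Suc k) - nk k - 1) * Q ^ 2)
          \<le> 1 / qr u (nk k) - 1 / (\<Prod>j\<in>{nk k..nk (Suc k)}. qr u j) \<and>
        1 / qr u (nk k) - 1 / (\<Prod>j\<in>{nk k..nk (Suc k)}. qr u j)
          \<le> nint (real (uprev u (nk k)) * x) \<and>
        nint (real (uprev u (nk k)) * x)
          \<le> 1 / qr u (nk k) - 1 / (\<Prod>j\<in>{nk k..nk (Suc k)}. qr u j)
             + 1 / (\<Prod>j\<in>{nk k..nk (Suc (Suc k))}. qr u j)) \<and>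
    rho u x 0 = max (nint x) (SUP k. nint (real (uprev u (nk k)) * x)) \<and>
    (\<forall>S'. admissible u S' \<and> S' \<noteq> S \<longrightarrow> x - xS u S' \<notin> \<int>)"
  using nint_uprev_le_enumerate[OF assms(1,3)] nint_uprev_enumerate_qr_bounds[OF assms(1,3)]
    rho_xS_0[OF assms(1,3)] xS_diff_not_Ints[OF assms(1,3)]
  unfolding x_def Q_def nk_def by blast

end
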